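(* In the setting described in the context, for every $j\in[\varepsilon^{-1}]$ it holds that $$\mathbb{E}\left[v(\gamma^{j-1})\right]=(1-(j-1)\varepsilon)\cdot v(S^* )=(1-(j-1)\varepsilon)\cdot\mathrm{OPT}(\mathcal{I}).$$
   Context: A CMK instance is $\mathcal{I}=(I,w,v,m,k)$ with $I$ a finite item set, $w:I\to[0,1]$, $v:I\to\mathbb{R}_{\ge0}$, $m,k\in\mathbb{N}_{>0}$. A configuration is $C\subseteq I$ with $|C|\le k$ and $\sum_{i\in C}w(i)\le1$; $\mathcal{C}$ is the set of configurations and $\mathcal{C}(i)=\{C\in\mathcal{C}:i\in C\}$. A solution is a tuple of $m$ configurations, with value $v$ of their union; $\mathrm{OPT}(\mathcal{I})$ is the maximum value. A fractional solution is $x\in\mathbb{R}_{\ge0}^{\mathcal{C}}$, with $\mathrm{cover}_i(x)=\sum_{C\in\mathcal{C}(i)}x_C$, $\|x\|=\sum_Cx_C$; it is feasible if $\mathrm{cover}(x)\in[0,1]^I$; for $y\in\mathbb{R}^I$, $v(y)=\sum_iy_iv(i)$, and $v(x)=v(\mathrm{cover}(x))$. For $S\subseteq I$ and $\ell\in\mathbb{N}$, $\mathrm{LP}(S,\ell)$ is: maximize $v(x)$ over feasible fractional solutions $x$ with $x_C=0$ whenever $C\not\subseteq S$, and $\|x\|=\ell$. For $\|x\|\ne0$, a random configuration $R$ is distributed by $x$ ($R\sim x$) if $\Pr(R=C)=x_C/\|x\|$. Given $\varepsilon\in(0,0.1)$, $\mathcal{I}$ is $\varepsilon$-simple if $m>\exp(\exp(\varepsilon^{-30}))$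 and $\varepsilon m\in\mathbb{N}$. Iterative randomized rounding: let $\varepsilon\in(0,0.1)$ with $\varepsilon^{-1/2}\in\mathbb{N}$ and $\mathcal{I}$ be $\varepsilon$-simple; let $q=\varepsilon m$ and $S_0=I$. For $j=1,\dots,\varepsilon^{-1}$: let $m_j=m(1-(j-1)\varepsilon)$; let $x^j$ be a $(1-\varepsilon)$-approximate solution of $\mathrm{LP}(S_{j-1},m_j)$ (a feasible solution of value at least $(1-\varepsilon)$ times its optimum), determined by the outcomes of the samples of previous iterations; sample independently $R^j_1,\dots,R^j_q\sim x^j$; set $S_j=S_{j-1}\setminus\bigcup_{b=1}^qR^j_b$. Let $\mathcal{F}_0$ be the trivial $\sigma$-algebra and $\mathcal{F}_j$ the $\sigma$-algebra generated by $\{R^{j'}_b: j'\le j,\ b\in[q]\}$. Fix an optimal solution $(C^*_1,\dots,C^*_m)$ and let $S^*=\bigcup_bC^*_b$ (so $v(S^* )=\mathrm{OPT}(\mathcal{I})$). Define $\gamma^0=\mathbb{1}_{S^*}\in\{0,1\}^I$ (indicator vector of $S^*$). For $j=1,\dots,\varepsilon^{-1}-1$ define $\lambda^j\in\mathbb{R}^I_{\ge0}$ by $\lambda^j_i=\frac{1-j\varepsilon}{1-(j-1)\varepsilon}\cdot\frac{1}{\Pr(i\in S_j\mid\mathcal{F}_{j-1})}\cdot\gamma^{j-1}_i$ for $i\in S_{j-1}$ (this conditional probability is positive for such $i$) and $\lambda^j_i=0$ for $i\notin S_{j-1}$; and define $\gamma^j_i=\mathbb{1}_{i\in S_j}\cdot\lambda^j_i$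 for all $i\in I$. *)

theory Defs
  imports "HOL-Probability.Probability"
begin

definition is_config :: "'a set \<Rightarrow> ('a \<Rightarrow> real) \<Rightarrow> nat \<Rightarrow> 'a set \<Rightarrow> bool" where
  "is_config I w k C \<longleftrightarrow> C \<subseteq> I \<and> card C \<le> k \<and> (\<Sum>i\<in>C. w i) \<le> 1"

definition configs :: "'a set \<Rightarrow> ('a \<Rightarrow> real) \<Rightarrow> nat \<Rightarrow> 'a set set" where
  "configs I w k = {C. is_config I w k C}"

definition OPT :: "'a set \<Rightarrow> ('a \<Rightarrow> real) \<Rightarrow> ('a \<Rightarrow> real) \<Rightarrow> nat \<Rightarrow> nat \<Rightarrow> real" where
  "OPT I w v m k = Max {(\<Sum>i\<in>(\<Union>b<m. Cs b). v i) | Cs. \<forall>b<m. Cs b \<in> configs I w k}"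

definition frac_sol :: "'a set \<Rightarrow> ('a \<Rightarrow> real) \<Rightarrow> nat \<Rightarrow> ('a set \<Rightarrow> real) \<Rightarrow> bool" where
  "frac_sol I w k x \<longleftrightarrow> (\<forall>C. x C \<ge> 0) \<and> (\<forall>C. C \<notin> configs I w k \<longrightarrow> x C = 0)"

definition cover :: "'a set \<Rightarrow> ('a \<Rightarrow> real) \<Rightarrow> nat \<Rightarrow> ('a set \<Rightarrow> real) \<Rightarrow> 'a \<Rightarrow> real" where
  "cover I w k x i = (\<Sum>C\<in>{C\<in>configs I w k. i \<in> C}. x C)"

definition xnorm :: "'a set \<Rightarrow> ('a \<Rightarrow> real) \<Rightarrow> nat \<Rightarrow> ('a set \<Rightarrow> real) \<Rightarrow> real" where
  "xnorm I w k x = (\<Sum>C\<in>configs I w k. x C)"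

definition feasible :: "'a set \<Rightarrow> ('a \<Rightarrow> real) \<Rightarrow> nat \<Rightarrow> ('a set \<Rightarrow> real) \<Rightarrow> bool" where
  "feasible I w k x \<longleftrightarrow> frac_sol I w k x \<and> (\<forall>i\<in>I. 0 \<le> cover I w k x i \<and> cover I w k x i \<le> 1)"

definition vvec :: "'a set \<Rightarrow> ('a \<Rightarrow> real) \<Rightarrow> ('a \<Rightarrow> real) \<Rightarrow> real" where
  "vvec I v y = (\<Sum>i\<in>I. y i * v i)"

definition vfrac :: "'a set \<Rightarrow> ('a \<Rightarrow> real) \<Rightarrow> ('a \<Rightarrow> real) \<Rightarrow> nat \<Rightarrow> ('a set \<Rightarrow> real) \<Rightarrow> real" where
  "vfrac I w v k x = vvec I v (cover I w k x)"

definition LP_feas :: "'a set \<Rightarrow> ('a \<Rightarrow> real) \<Rightarrow> nat \<Rightarrow> 'a set \<Rightarrow> real \<Rightarrow> ('a set \<Rightarrow> real) \<Rightarrow> bool" where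
  "LP_feas I w k S l x \<longleftrightarrow> feasible I w k x \<and> (\<forall>C. \<not> C \<subseteq> S \<longrightarrow> x C = 0) \<and> xnorm I w k x = l"

definition LP_opt :: "'a set \<Rightarrow> ('a \<Rightarrow> real) \<Rightarrow> ('a \<Rightarrow> real) \<Rightarrow> nat \<Rightarrow> 'a set \<Rightarrow> real \<Rightarrow> real" where
  "LP_opt I w v k S l = (SUP x\<in>{x. LP_feas I w k S l x}. vfrac I w v k x)"

definition approx_LP :: "real \<Rightarrow> 'a set \<Rightarrow> ('a \<Rightarrow> real) \<Rightarrow> ('a \<Rightarrow> real) \<Rightarrow> nat \<Rightarrow> 'a set \<Rightarrow> real \<Rightarrow> ('a set \<Rightarrow> real) \<Rightarrow> bool" where
  "approx_LP \<epsilon> I w v k S l x \<longleftrightarrow> LP_feas I w k S l x \<and> vfrac I w v k x \<ge> (1 - \<epsilon>) * LP_opt I w v k S l"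

definition sample_cfg :: "'a set \<Rightarrow> ('a \<Rightarrow> real) \<Rightarrow> nat \<Rightarrow> ('a set \<Rightarrow> real) \<Rightarrow> 'a set pmf" where
  "sample_cfg I w k x = embed_pmf (\<lambda>C. x C / xnorm I w k x)"

definition round_pmf :: "'a set \<Rightarrow> ('a \<Rightarrow> real) \<Rightarrow> nat \<Rightarrow> nat \<Rightarrow> ('a set \<Rightarrow> real) \<Rightarrow> (nat \<Rightarrow> 'a set) pmf" where
  "round_pmf I w k q x = Pi_pmf {..<q} {} (\<lambda>_. sample_cfg I w k x)"

text \<open>A history is the list of the outcomes of the rounds performed so far.
  S h is the set S_j after the rounds recorded in h (S_0 = I).\<close>
definition Sset :: "'a set \<Rightarrow> nat \<Rightarrow> (nat \<Rightarrow> 'a set) list \<Rightarrow> 'a set" where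
  "Sset I q h = I - (\<Union>R\<in>set h. \<Union>b<q. R b)"

text \<open>Distribution of the history after n rounds; pol j h is the solution x^j chosen in
  round j as a function of the history h of the previous j-1 rounds.\<close>
primrec hist_pmf :: "'a set \<Rightarrow> ('a \<Rightarrow> real) \<Rightarrow> nat \<Rightarrow> nat
    \<Rightarrow> (nat \<Rightarrow> (nat \<Rightarrow> 'a set) list \<Rightarrow> 'a set \<Rightarrow> real) \<Rightarrow> nat \<Rightarrow> (nat \<Rightarrow> 'a set) list pmf" where
  "hist_pmf I w k q pol 0 = return_pmf []"
| "hist_pmf I w k q pol (Suc n) =
     bind_pmf (hist_pmf I w k q pol n)
       (\<lambda>h. map_pmf (\<lambda>R. h @ [R]) (round_pmf I w k q (pol (Suc n) h)))"

text \<open>Pr(i \<in> S_j | F_(j-1)), evaluated at the history h of the first j-1 rounds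
  (elementary conditional probability given the atom {history = h}).\<close>
definition condprob :: "'a set \<Rightarrow> ('a \<Rightarrow> real) \<Rightarrow> nat \<Rightarrow> nat
    \<Rightarrow> (nat \<Rightarrow> (nat \<Rightarrow> 'a set) list \<Rightarrow> 'a set \<Rightarrow> real) \<Rightarrow> nat \<Rightarrow> 'a \<Rightarrow> (nat \<Rightarrow> 'a set) list \<Rightarrow> real" where
  "condprob I w k q pol j i h =
     measure_pmf.prob (hist_pmf I w k q pol j) {h'. take (j - 1) h' = h \<and> i \<in> Sset I q h'}
     / measure_pmf.prob (hist_pmf I w k q pol (j - 1)) {h}"

text \<open>lambda^j, given gamma^(j-1) as g, at history h of the first j rounds.\<close>
definition lam :: "real \<Rightarrow> 'a set \<Rightarrow> ('a \<Rightarrow> real) \<Rightarrow> nat \<Rightarrow> nat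
    \<Rightarrow> (nat \<Rightarrow> (nat \<Rightarrow> 'a set) list \<Rightarrow> 'a set \<Rightarrow> real) \<Rightarrow> nat \<Rightarrow> (nat \<Rightarrow> 'a set) list
    \<Rightarrow> ('a \<Rightarrow> real) \<Rightarrow> 'a \<Rightarrow> real" where
  "lam \<epsilon> I w k q pol j h g i =
     (if i \<in> Sset I q (take (j - 1) h)
      then (1 - real j * \<epsilon>) / (1 - (real j - 1) * \<epsilon>)
           * (1 / condprob I w k q pol j i (take (j - 1) h)) * g i
      else 0)"

text \<open>gamma^j at history h of the first j rounds; gamma^0 = indicator of S*.\<close>
primrec gam :: "real \<Rightarrow> 'a set \<Rightarrow> ('a \<Rightarrow> real) \<Rightarrow> nat \<Rightarrow> nat
    \<Rightarrow> (nat \<Rightarrow> (nat \<Rightarrow> 'a set) list \<Rightarrow> 'a set \<Rightarrow> real) \<Rightarrow> 'a set \<Rightarrow> nat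
    \<Rightarrow> (nat \<Rightarrow> 'a set) list \<Rightarrow> 'a \<Rightarrow> real" where
  "gam \<epsilon> I w k q pol Sstar 0 h = (\<lambda>i. if i \<in> Sstar then 1 else 0)"
| "gam \<epsilon> I w k q pol Sstar (Suc j) h =
     (\<lambda>i. (if i \<in> Sset I q h then 1 else 0)
          * lam \<epsilon> I w k q pol (Suc j) h (gam \<epsilon> I w k q pol Sstar j (take j h)) i)"

end

theory Submission
  imports Defs
begin

text \<open>Fix an item i of S*. Given the history h of the first n rounds, i survives round n+1 with
  probability exactly Pr(i \<in> S_(n+1) | F_n), and lambda^(n+1)_i divides by that probability, so
  averaging gamma^(n+1)_i over round n+1 gives (1-(n+1)\<epsilon>)/(1-n\<epsilon>) times gamma^n_i. By the tower
  property E[gamma^n_i] = 1-n\<epsilon> for every i \<in> S*, and linearity of v gives the claim. What makes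
  the conditional probability positive is that x^(n+1) has norm m(1-n\<epsilon>) \<ge> \<epsilon>m > 1 but covers i at
  most once, so some configuration in its support avoids i.\<close>

lemma integral_bind_pmf_finite:
  fixes f :: "'b \<Rightarrow> real"
  assumes finM: "finite (set_pmf M)" and finN: "\<And>x. x \<in> set_pmf M \<Longrightarrow> finite (set_pmf (N x))"
  shows "measure_pmf.expectation (bind_pmf M N) f
       = measure_pmf.expectation M (\<lambda>x. measure_pmf.expectation (N x) f)"
proof -
  define S where "S = set_pmf (bind_pmf M N)"
  have finS: "finite S" unfolding S_def using finM finN by simp
  have pmf_bind_sum: "pmf (bind_pmf M N) y = (\<Sum>x\<in>set_pmf M. pmf (N x) y * pmf M x)" for y
    unfolding pmf_bind by (rule integral_measure_pmf_real) (use finM in auto)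
  have inner: "measure_pmf.expectation (N x) f = (\<Sum>y\<in>S. f y * pmf (N x) y)" if "x \<in> set_pmf M" for x
    by (rule integral_measure_pmf_real) (use finS that in \<open>auto simp: S_def\<close>)
  have "measure_pmf.expectation (bind_pmf M N) f = (\<Sum>y\<in>S. f y * pmf (bind_pmf M N) y)"
    by (rule integral_measure_pmf_real) (use finS in \<open>auto simp: S_def\<close>)
  also have "\<dots> = (\<Sum>x\<in>set_pmf M. (\<Sum>y\<in>S. f y * pmf (N x) y) * pmf M x)"
    by (simp add: pmf_bind_sum sum_distrib_left sum_distrib_right mult.assoc sum.swap[of _ S])
  also have "\<dots> = (\<Sum>x\<in>set_pmf M. measure_pmf.expectation (N x) f * pmf M x)"
    by (simp add: inner)
  also have "\<dots> = measure_pmf.expectation M (\<lambda>x. measure_pmf.expectation (N x) f)"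
    by (rule integral_measure_pmf_real[symmetric]) (use finM in auto)
  finally show ?thesis .
qed

lemma integral_pmf_cong:
  assumes "\<And>x. x \<in> set_pmf M \<Longrightarrow> f x = g x"
  shows "measure_pmf.expectation M f = measure_pmf.expectation M (g :: _ \<Rightarrow> real)"
  using assms by (auto intro!: integral_cong_AE simp: AE_measure_pmf_iff)

lemma finite_configs: "finite I \<Longrightarrow> finite (configs I w k)"
  by (rule finite_subset[of _ "Pow I"]) (auto simp: configs_def is_config_def)

lemma configs_subset: "C \<in> configs I w k \<Longrightarrow> C \<subseteq> I"
  by (simp add: configs_def is_config_def)

lemma set_pmf_sample_cfg:
  assumes fin: "finite I" and x: "frac_sol I w k x" and pos: "xnorm I w k x > 0"
  shows "set_pmf (sample_cfg I w k x) = {C. x C \<noteq> 0}"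
proof -
  define f where "f = (\<lambda>C. x C / xnorm I w k x)"
  have nn: "\<And>C. 0 \<le> f C" using x pos by (auto simp: frac_sol_def f_def)
  have "(\<integral>\<^sup>+C. ennreal (f C) \<partial>count_space UNIV) = (\<Sum>C\<in>configs I w k. ennreal (f C))"
    by (rule nn_integral_count_space') (use fin x in \<open>auto simp: finite_configs f_def frac_sol_def\<close>)
  also have "\<dots> = ennreal (\<Sum>C\<in>configs I w k. f C)" using nn by (simp add: sum_ennreal)
  also have "(\<Sum>C\<in>configs I w k. f C) = 1"
    using pos by (simp add: f_def sum_divide_distrib[symmetric] xnorm_def)
  finally have prob: "(\<integral>\<^sup>+C. ennreal (f C) \<partial>count_space UNIV) = 1" by simp
  show "set_pmf (sample_cfg I w k x) = {C. x C \<noteq> 0}"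
    using set_embed_pmf[of f, OF nn prob] pos by (simp add: sample_cfg_def f_def)
qed

lemma finite_set_pmf_sample_cfg:
  assumes "finite I" "frac_sol I w k x" "xnorm I w k x > 0"
  shows "finite (set_pmf (sample_cfg I w k x))"
proof -
  have "set_pmf (sample_cfg I w k x) \<subseteq> configs I w k"
    using assms by (auto simp: set_pmf_sample_cfg frac_sol_def)
  thus ?thesis using finite_configs[OF assms(1)] finite_subset by blast
qed

lemma sample_cfg_avoids:
  assumes fin: "finite I" and x: "frac_sol I w k x" and cov: "cover I w k x i \<le> 1"
    and norm: "xnorm I w k x > 1"
  shows "\<exists>C\<in>set_pmf (sample_cfg I w k x). i \<notin> C"
proof (rule ccontr)
  assume "\<not> ?thesis"
  hence all_contain: "\<And>C. x C \<noteq> 0 \<Longrightarrow> i \<in> C" using set_pmf_sample_cfg[OF fin x] norm by auto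
  have "xnorm I w k x = (\<Sum>C\<in>{C\<in>configs I w k. i \<in> C}. x C)"
    unfolding xnorm_def
    by (rule sum.mono_neutral_right) (use fin all_contain in \<open>auto simp: finite_configs\<close>)
  also have "\<dots> = cover I w k x i" by (simp add: cover_def)
  finally show False using cov norm by simp
qed

lemma set_pmf_round_pmf:
  "set_pmf (round_pmf I w k q x) = PiE_dflt {..<q} {} (\<lambda>_. set_pmf (sample_cfg I w k x))"
  unfolding round_pmf_def by (simp add: set_Pi_pmf o_def)

lemma finite_set_pmf_round_pmf:
  assumes "finite I" "frac_sol I w k x" "xnorm I w k x > 0"
  shows "finite (set_pmf (round_pmf I w k q x))"
  unfolding set_pmf_round_pmf using finite_set_pmf_sample_cfg[OF assms] by (intro finite_PiE_dflt) auto

definition survival_prob :: "'a set \<Rightarrow> ('a \<Rightarrow> real) \<Rightarrow> nat \<Rightarrow> nat \<Rightarrow> ('a set \<Rightarrow> real) \<Rightarrow> 'a \<Rightarrow> real" where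
  "survival_prob I w k q x i = measure_pmf.prob (round_pmf I w k q x) {R. \<forall>b<q. i \<notin> R b}"

lemma survival_prob_pos:
  assumes "finite I" "frac_sol I w k x" "cover I w k x i \<le> 1" "xnorm I w k x > 1"
  shows "survival_prob I w k q x i > 0"
proof -
  obtain C where C: "C \<in> set_pmf (sample_cfg I w k x)" "i \<notin> C"
    using sample_cfg_avoids[OF assms] by blast
  define R where "R = (\<lambda>b. if b < q then C else {})"
  have "R \<in> set_pmf (round_pmf I w k q x)"
    unfolding set_pmf_round_pmf PiE_dflt_def R_def using C by auto
  moreover have "R \<in> {R. \<forall>b<q. i \<notin> R b}" using C by (auto simp: R_def)
  ultimately show ?thesis unfolding survival_prob_def by (rule measure_pmf_posI)
qed

lemma Sset_append: "Sset I q (h @ [R]) = Sset I q h - (\<Union>b<q. R b)"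
  by (auto simp: Sset_def)

lemma length_hist_pmf: "h \<in> set_pmf (hist_pmf I w k q pol n) \<Longrightarrow> length h = n"
  by (induction n arbitrary: h) auto

lemma gam_Suc_append:
  assumes "length h = n"
  shows "gam \<epsilon> I w k q pol S (Suc n) (h @ [R]) i =
    (if i \<in> Sset I q h \<and> (\<forall>b<q. i \<notin> R b)
     then (1 - real (Suc n) * \<epsilon>) / (1 - real n * \<epsilon>) / condprob I w k q pol (Suc n) i h
          * gam \<epsilon> I w k q pol S n h i
     else 0)"
  using assms by (auto simp: lam_def Sset_append)

lemma gam_nonzero_imp_Sset:
  assumes "S \<subseteq> I" "length h = n" "gam \<epsilon> I w k q pol S n h i \<noteq> 0"
  shows "i \<in> Sset I q h"
  using assms by (cases n) (auto simp: Sset_def split: if_splits)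

locale iterative_rounding =
  fixes I :: "'a set" and w :: "'a \<Rightarrow> real" and k q :: nat
    and pol :: "nat \<Rightarrow> (nat \<Rightarrow> 'a set) list \<Rightarrow> 'a set \<Rightarrow> real" and N :: nat
  assumes finite_I: "finite I"
    and feasible_pol: "\<And>n h. n < N \<Longrightarrow> h \<in> set_pmf (hist_pmf I w k q pol n) \<Longrightarrow>
          feasible I w k (pol (Suc n) h)"
    and xnorm_pol_gt_1: "\<And>n h. n < N \<Longrightarrow> h \<in> set_pmf (hist_pmf I w k q pol n) \<Longrightarrow>
          xnorm I w k (pol (Suc n) h) > 1"
begin

abbreviation H :: "nat \<Rightarrow> (nat \<Rightarrow> 'a set) list pmf" where
  "H \<equiv> hist_pmf I w k q pol"

abbreviation next_round :: "nat \<Rightarrow> (nat \<Rightarrow> 'a set) list \<Rightarrow> (nat \<Rightarrow> 'a set) pmf" where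
  "next_round n h \<equiv> round_pmf I w k q (pol (Suc n) h)"

lemma finite_set_pmf_next_round: "n < N \<Longrightarrow> h \<in> set_pmf (H n) \<Longrightarrow> finite (set_pmf (next_round n h))"
  using feasible_pol xnorm_pol_gt_1 finite_I
  by (intro finite_set_pmf_round_pmf) (fastforce simp: feasible_def)+

lemma finite_set_pmf_hist: "n \<le> N \<Longrightarrow> finite (set_pmf (H n))"
  by (induction n) (auto simp: finite_set_pmf_next_round)

lemma integral_hist_Suc:
  fixes f :: "(nat \<Rightarrow> 'a set) list \<Rightarrow> real"
  assumes "n < N"
  shows "measure_pmf.expectation (H (Suc n)) f
       = measure_pmf.expectation (H n) (\<lambda>h. measure_pmf.expectation (next_round n h) (\<lambda>R. f (h @ [R])))"
proof -
  have "measure_pmf.expectation (H (Suc n)) f = measure_pmf.expectation (H n)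
     (\<lambda>h. measure_pmf.expectation (map_pmf (\<lambda>R. h @ [R]) (next_round n h)) f)"
    using assms by (simp only: hist_pmf.simps)
      (rule integral_bind_pmf_finite, auto simp: finite_set_pmf_hist finite_set_pmf_next_round)
  thus ?thesis by (simp only: integral_map_pmf)
qed

lemma survival_prob_next_round_pos:
  assumes "n < N" "h \<in> set_pmf (H n)" "i \<in> I"
  shows "survival_prob I w k q (pol (Suc n) h) i > 0"
  using assms feasible_pol[OF assms(1,2)] xnorm_pol_gt_1[OF assms(1,2)] finite_I
  by (intro survival_prob_pos) (auto simp: feasible_def)

lemma condprob_eq_survival_prob:
  assumes n: "n < N" and h: "h \<in> set_pmf (H n)" and i: "i \<in> Sset I q h"
  shows "condprob I w k q pol (Suc n) i h = survival_prob I w k q (pol (Suc n) h) i"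
proof -
  define E where "E = {h'. take n h' = h \<and> i \<in> Sset I q h'}"
  define F where "F a = measure_pmf.expectation (next_round n a) (\<lambda>R. indicator E (a @ [R]) :: real)" for a
  have F_supp: "a = h" if a: "a \<in> set_pmf (H n)" and "F a \<noteq> 0" for a
  proof -
    obtain R where "a @ [R] \<in> E" using \<open>F a \<noteq> 0\<close> by (force simp: F_def indicator_def)
    thus "a = h" using length_hist_pmf[OF a] by (simp add: E_def)
  qed
  have "(\<lambda>R. indicator E (h @ [R]) :: real) = indicator {R. \<forall>b<q. i \<notin> R b}"
    using length_hist_pmf[OF h] i by (auto simp: indicator_def E_def Sset_append fun_eq_iff)
  hence F_h: "F h = survival_prob I w k q (pol (Suc n) h) i"
    by (simp add: F_def survival_prob_def)
  have "measure_pmf.prob (H (Suc n)) E = measure_pmf.expectation (H (Suc n)) (indicator E)"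
    by simp
  also have "\<dots> = measure_pmf.expectation (H n) F"
    unfolding F_def by (rule integral_hist_Suc[OF n])
  also have "\<dots> = F h * pmf (H n) h"
    using integral_measure_pmf_real[of "{h}" "H n" F] F_supp by auto
  finally have "measure_pmf.prob (H (Suc n)) E = survival_prob I w k q (pol (Suc n) h) i * pmf (H n) h"
    by (simp add: F_h)
  moreover have "pmf (H n) h > 0" using h by (simp add: pmf_positive)
  ultimately show ?thesis by (simp add: condprob_def E_def measure_pmf_single)
qed

lemma integral_next_round_gam:
  assumes n: "n < N" and h: "h \<in> set_pmf (H n)" and S: "S \<subseteq> I"
  shows "measure_pmf.expectation (next_round n h) (\<lambda>R. gam \<epsilon> I w k q pol S (Suc n) (h @ [R]) i)
       = (1 - real (Suc n) * \<epsilon>) / (1 - real n * \<epsilon>) * gam \<epsilon> I w k q pol S n h i"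
proof (cases "i \<in> Sset I q h")
  case True
  define c where "c = (1 - real (Suc n) * \<epsilon>) / (1 - real n * \<epsilon>) * gam \<epsilon> I w k q pol S n h i"
  define p where "p = survival_prob I w k q (pol (Suc n) h) i"
  have "i \<in> I" using True by (simp add: Sset_def)
  hence "p > 0" using survival_prob_next_round_pos[OF n h] by (simp add: p_def)
  have "gam \<epsilon> I w k q pol S (Suc n) (h @ [R]) i = indicator {R. \<forall>b<q. i \<notin> R b} R * (c / p)" for R
    unfolding gam_Suc_append[OF length_hist_pmf[OF h]] condprob_eq_survival_prob[OF n h True]
    using True by (simp add: c_def p_def indicator_def)
  hence "measure_pmf.expectation (next_round n h) (\<lambda>R. gam \<epsilon> I w k q pol S (Suc n) (h @ [R]) i) = p * (c / p)"
    by (simp add: p_def survival_prob_def)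
  thus ?thesis using \<open>p > 0\<close> by (simp add: c_def)
next
  case False
  hence "gam \<epsilon> I w k q pol S n h i = 0"
    using gam_nonzero_imp_Sset[OF S length_hist_pmf[OF h]] by blast
  thus ?thesis unfolding gam_Suc_append[OF length_hist_pmf[OF h]] using False by simp
qed

lemma integral_gam:
  assumes S: "S \<subseteq> I" and "n \<le> N" and "0 < \<epsilon>" "real n * \<epsilon> \<le> 1"
  shows "measure_pmf.expectation (H n) (\<lambda>h. gam \<epsilon> I w k q pol S n h i)
       = (1 - real n * \<epsilon>) * indicator S i"
  using assms(2-)
proof (induction n)
  case 0
  show ?case by (simp add: indicator_def)
next
  case (Suc n)
  have "1 - real n * \<epsilon> > 0" using Suc.prems by (simp add: algebra_simps)
  hence IH: "measure_pmf.expectation (H n) (\<lambda>h. gam \<epsilon> I w k q pol S n h i)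
      = (1 - real n * \<epsilon>) * indicator S i"
    using Suc by simp
  have "measure_pmf.expectation (H (Suc n)) (\<lambda>h. gam \<epsilon> I w k q pol S (Suc n) h i)
      = measure_pmf.expectation (H n)
          (\<lambda>h. (1 - real (Suc n) * \<epsilon>) / (1 - real n * \<epsilon>) * gam \<epsilon> I w k q pol S n h i)"
    using Suc.prems integral_next_round_gam[OF _ _ S]
    by (simp add: integral_hist_Suc cong: integral_pmf_cong)
  also have "\<dots> = (1 - real (Suc n) * \<epsilon>) / (1 - real n * \<epsilon>) * ((1 - real n * \<epsilon>) * indicator S i)"
    by (simp only: integral_mult_right_zero IH)
  also have "\<dots> = (1 - real (Suc n) * \<epsilon>) * indicator S i"
    using \<open>1 - real n * \<epsilon> > 0\<close> by simp
  finally show ?case .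
qed

lemma integral_vvec_gam:
  assumes S: "S \<subseteq> I" and "n \<le> N" and "0 < \<epsilon>" "real n * \<epsilon> \<le> 1"
  shows "measure_pmf.expectation (H n) (\<lambda>h. vvec I v (gam \<epsilon> I w k q pol S n h))
       = (1 - real n * \<epsilon>) * (\<Sum>i\<in>S. v i)"
proof -
  have "measure_pmf.expectation (H n) (\<lambda>h. vvec I v (gam \<epsilon> I w k q pol S n h))
      = (\<Sum>i\<in>I. measure_pmf.expectation (H n) (\<lambda>h. gam \<epsilon> I w k q pol S n h i) * v i)"
    unfolding vvec_def using finite_set_pmf_hist[OF assms(2)]
    by (simp add: integrable_measure_pmf_finite)
  also have "\<dots> = (1 - real n * \<epsilon>) * (\<Sum>i\<in>I. indicator S i * v i)"
    using integral_gam[OF assms] by (simp add: sum_distrib_left mult.assoc)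
  also have "(\<Sum>i\<in>I. indicator S i * v i) = (\<Sum>i\<in>S. v i)"
    using S finite_I by (simp add: sum.inter_restrict[symmetric] Int_absorb1 indicator_def if_distrib)
  finally show ?thesis .
qed

end

lemma eps_mult_gt_1_if_simple:
  fixes \<epsilon> :: real
  assumes "0 < \<epsilon>" "\<epsilon> < 0.1" "real m > exp (exp (\<epsilon> powr (-30)))"
  shows "\<epsilon> * real m > 1"
proof -
  have "\<epsilon> ^ 30 \<le> \<epsilon>" using assms power_decreasing[of 1 30 \<epsilon>] by simp
  hence "1 / \<epsilon> \<le> 1 / \<epsilon> ^ 30" using assms by (simp add: frac_le)
  also have "\<dots> = \<epsilon> powr (-30)" using assms by (simp add: powr_minus_divide powr_realpow)
  also have "\<dots> < exp (exp (\<epsilon> powr (-30)))"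
    by (smt (verit) exp_gt_zero exp_ge_add_one_self)
  finally have "1 / \<epsilon> < real m" using assms(3) by linarith
  thus ?thesis using assms(1) by (simp add: field_simps)
qed

theorem lemma3p4:
  fixes I :: "'a set" and w v :: "'a \<Rightarrow> real" and m k q :: nat and \<epsilon> :: real
    and pol :: "nat \<Rightarrow> (nat \<Rightarrow> 'a set) list \<Rightarrow> 'a set \<Rightarrow> real"
    and Cstar :: "nat \<Rightarrow> 'a set" and j :: nat
  assumes fin: "finite I"
    and w_range: "\<forall>i\<in>I. 0 \<le> w i \<and> w i \<le> 1"
    and v_nonneg: "\<forall>i\<in>I. 0 \<le> v i"
    and m_pos: "m > 0" and k_pos: "k > 0"
    and eps: "0 < \<epsilon>" "\<epsilon> < 0.1"
    and eps_sqrt: "\<exists>n::nat. 1 / sqrt \<epsilon> = real n"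
    and simple_m: "real m > exp (exp (\<epsilon> powr (-30)))"
    and q_def: "real q = \<epsilon> * real m"
    and pol_approx: "\<forall>j'::nat. 1 \<le> j' \<and> real j' \<le> 1 / \<epsilon> \<longrightarrow>
        (\<forall>h\<in>set_pmf (hist_pmf I w k q pol (j' - 1)).
           approx_LP \<epsilon> I w v k (Sset I q h) (real m * (1 - (real j' - 1) * \<epsilon>)) (pol j' h))"
    and Cstar_conf: "\<forall>b<m. Cstar b \<in> configs I w k"
    and Cstar_opt: "(\<Sum>i\<in>(\<Union>b<m. Cstar b). v i) = OPT I w v m k"
    and j_range: "1 \<le> j" "real j \<le> 1 / \<epsilon>"
  shows "measure_pmf.expectation (hist_pmf I w k q pol (j - 1))
           (\<lambda>h. vvec I v (gam \<epsilon> I w k q pol (\<Union>b<m. Cstar b) (j - 1) h))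
         = (1 - (real j - 1) * \<epsilon>) * (\<Sum>i\<in>(\<Union>b<m. Cstar b). v i)
       \<and> (1 - (real j - 1) * \<epsilon>) * (\<Sum>i\<in>(\<Union>b<m. Cstar b). v i)
         = (1 - (real j - 1) * \<epsilon>) * OPT I w v m k"
proof -
  define S where "S = (\<Union>b<m. Cstar b)"
  have S_sub: "S \<subseteq> I" unfolding S_def using Cstar_conf configs_subset by blast
  have eps_m: "1 < \<epsilon> * real m" using eps_mult_gt_1_if_simple[OF eps simple_m] .
  interpret iterative_rounding I w k q pol "j - 1"
  proof
    fix n h assume n: "n < j - 1" and h: "h \<in> set_pmf (hist_pmf I w k q pol n)"
    have "real (Suc n) \<le> 1 / \<epsilon>" using n j_range by linarith
    hence lp: "LP_feas I w k (Sset I q h) (real m * (1 - real n * \<epsilon>)) (pol (Suc n) h)"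
      using pol_approx h by (auto simp: approx_LP_def)
    then show "feasible I w k (pol (Suc n) h)" by (simp add: LP_feas_def)
    have "\<epsilon> \<le> 1 - real n * \<epsilon>"
      using \<open>real (Suc n) \<le> 1 / \<epsilon>\<close> eps by (simp add: field_simps)
    hence "real m * \<epsilon> \<le> real m * (1 - real n * \<epsilon>)" by (simp add: mult_left_mono)
    with lp eps_m show "xnorm I w k (pol (Suc n) h) > 1" by (simp add: LP_feas_def mult.commute)
  qed (fact fin)
  have "real (j - 1) * \<epsilon> \<le> 1" using j_range eps by (simp add: field_simps)
  hence "measure_pmf.expectation (hist_pmf I w k q pol (j - 1))
           (\<lambda>h. vvec I v (gam \<epsilon> I w k q pol S (j - 1) h))
       = (1 - real (j - 1) * \<epsilon>) * (\<Sum>i\<in>S. v i)"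
    using integral_vvec_gam[OF S_sub _ eps(1)] by simp
  thus ?thesis using j_range Cstar_opt by (simp add: S_def of_nat_diff)
qed

end
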